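(* Let the parametric setting, finite element spaces, lifts, finite element solutions and reduced basis solutions be as in the context, and fix $\mu\in\mathcal{D}$. Let $u(\mu)\in V_g(\mu)$ be the exact solution of the weak primal problem and $\sigma(\mu)\in\Sigma_{fg}(\mu)$ the exact solution of the dual problem. Then $$|\!|\!|u(\mu)-u_h(\mu)|\!|\!|_\mu\le|\!|\!|u(\mu)-u^N_{rb}(\mu)|\!|\!|_\mu,\qquad \|\sigma(\mu)-\sigma_h(\mu)\|_{R,\mu}\le\|\sigma(\mu)-\sigma^N_{rb}(\mu)\|_{R,\mu},$$ $$|\!|\!|(u(\mu)-u_h(\mu),\sigma(\mu)-\sigma_h(\mu))|\!|\!|_\mu\le|\!|\!|(u(\mu)-u^N_{rb}(\mu),\sigma(\mu)-\sigma^N_{rb}(\mu))|\!|\!|_\mu.$$ If moreover $\mu\in S_N$, all three inequalities are equalities.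
   Context: Setting: $\Omega\subset\mathbb{R}^d$ ($d=2,3$) bounded polyhedral Lipschitz; $(\cdot,\cdot)$ the (possibly vector) $L^2(\Omega)$ inner product, $\|\cdot\|_0$ its norm, $(\cdot,\cdot)_\Gamma$ the $L^2$ product on $\Gamma\subset\partial\Omega$. $V$ a Hilbert space compactly embedded in $L^2(\Omega)$, $\Lambda:V\to L^2(\Omega)$ linear continuous, $\Lambda^t$ its formal adjoint, $\Sigma=\{\tau\in L^2(\Omega):\Lambda^t\tau\in L^2(\Omega)\}$, traces $\mathrm{tr}_0$ on $V$, $\mathrm{tr}_1$ on $\Sigma$ with $(\tau,\Lambda v)-(\Lambda^t\tau,v)=(\mathrm{tr}_1\tau,\mathrm{tr}_0v)_{\partial\Omega}$. $\partial\Omega=\overline\Gamma_D\cup\overline\Gamma_N$ disjoint, $\mathrm{meas}(\Gamma_D)\ne0$. $V_0=\{v\in V:\mathrm{tr}_0v=0\text{ on }\Gamma_D\}$, $\Sigma_0=\{\tau\in\Sigma:\mathrm{tr}_1\tau=0\text{ on }\Gamma_N\}$, $\Sigma_{00}=\{\tau\in\Sigma_0:\Lambda^t\tau=0\}$; $\|\Lambda v\|_0\ge c_3\|v\|_0$ on $V_0$; continuous inf-sup $\sup_{\tau\in\Sigma}\frac{(\Lambda^t\tau,v)}{\|\tau\|_0+\|\Lambda^t\tau\|_0}\ge\beta\|v\|_0$. Parameters $\mu$ range over a set $\mathcal{D}$; for each $\mu$, $\mathcal{A}(\mu)$ is self-adjoint on $L^2(\Omega)$ with $c_1\|q\|_0^2\le(\mathcal{A}(\mu)q,q)\le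 c_2\|q\|_0^2$, and data $f(\mu),g_D(\mu),g_N(\mu)\in L^2$ describe $\Lambda^t(\mathcal{A}(\mu)\Lambda u)=f(\mu)$, $\mathrm{tr}_0u=g_D(\mu)$ on $\Gamma_D$, $-\mathrm{tr}_1(\mathcal{A}(\mu)\Lambda u)=g_N(\mu)$ on $\Gamma_N$. $a(v,w;\mu)=(\mathcal{A}(\mu)\Lambda v,\Lambda w)$, $b(\rho,\tau;\mu)=(\mathcal{A}(\mu)^{-1}\rho,\tau)$, $c((\rho,w),(\tau,v);\mu)=b(\rho,\tau;\mu)+(\Lambda^t\tau,w)+(\Lambda^t\rho,v)$. $V_g(\mu)=\{v\in V:\mathrm{tr}_0v=g_D(\mu)\text{ on }\Gamma_D\}$, $\Sigma_{fg}(\mu)=\{\tau\in\Sigma:\Lambda^t\tau=-f(\mu),\ \mathrm{tr}_1\tau=g_N(\mu)\text{ on }\Gamma_N\}$. Exact solutions: $u(\mu)\in V_g(\mu)$ with $a(u(\mu),v;\mu)=(f(\mu),v)-(g_N(\mu),\mathrm{tr}_0v)_{\Gamma_N}$ for all $v\in V_0$; $\sigma(\mu)\in\Sigma_{fg}(\mu)$ with $b(\sigma(\mu),\tau;\mu)=-(\mathrm{tr}_1\tau,g_D(\mu))_{\Gamma_D}$ for all $\tau\in\Sigma_{00}$. Norms: $|\!|\!|v|\!|\!|_\mu=\sqrt{a(v,v;\mu)}$, $\|\tau\|_{R,\mu}=\sqrt{b(\tau,\tau;\mu)}$, $|\!|\!|(v,\tau)|\!|\!|_\mu=\sqrt{|\!|\!|v|\!|\!|_\mu^2+\|\tau\|_{R,\mu}^2}$.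 Finite elements: $V_h\subset V$, $D_h\subset L^2(\Omega)$, $\Sigma_h\subset\Sigma$ finite element spaces with $\Lambda^t\Sigma_h=D_h$ and the pair $(\Sigma_h,D_h)$ satisfying a discrete inf-sup condition; $V_{0,h}=V_h\cap V_0$, $\Sigma_{0,h}=\Sigma_h\cap\Sigma_0$. For each $\mu$ fixed lifts $u_g(\mu)\in V_h\cap V_g(\mu)$ and $\sigma_{fg}(\mu)\in\Sigma_h\cap\Sigma_{fg}(\mu)$ are given (data assumed compatible so these exist, and $f(\mu)\in D_h$). Let $\varphi(v;\mu)=(f(\mu),v)-(g_N(\mu),\mathrm{tr}_0v)_{\Gamma_N}-a(u_g(\mu),v;\mu)$ and $\psi(\tau;\mu)=-(\mathrm{tr}_1\tau,g_D(\mu))_{\Gamma_D}-b(\sigma_{fg}(\mu),\tau;\mu)$. FE primal solution: $u_h(\mu)=u_{0,h}(\mu)+u_g(\mu)$ with $u_{0,h}(\mu)\in V_{0,h}$ and $a(u_{0,h}(\mu),v;\mu)=\varphi(v;\mu)$ for all $v\in V_{0,h}$. FE dual solution: $\sigma_h(\mu)=\sigma_{00,h}(\mu)+\sigma_{fg}(\mu)$ where $(\sigma_{00,h}(\mu),w_h)\in\Sigma_{0,h}\times D_h$ solves $c((\sigma_{00,h}(\mu),w_h),(\tau,v);\mu)=\psi(\tau;\mu)$ for all $(\tau,v)\in\Sigma_{0,h}\times D_h$. Reduced basis: $S_N=\{\mu_i\}_{i=1}^N\subset\mathcal{D}$, $V^N_{rb}=\mathrm{span}\{u_{0,h}(\mu_i)\}_{i=1}^N$,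 $\Sigma^N_{rb}=\mathrm{span}\{\sigma_{00,h}(\mu_i)\}_{i=1}^N$ (snapshots computed with the same lifts). RB primal solution: $u^N_{rb}(\mu)=u^N_{0,rb}(\mu)+u_g(\mu)$ with $u^N_{0,rb}(\mu)\in V^N_{rb}$, $a(u^N_{0,rb}(\mu),v;\mu)=\varphi(v;\mu)$ for all $v\in V^N_{rb}$. RB dual solution: $\sigma^N_{rb}(\mu)=\sigma^N_{00,rb}(\mu)+\sigma_{fg}(\mu)$ with $\sigma^N_{00,rb}(\mu)\in\Sigma^N_{rb}$, $b(\sigma^N_{00,rb}(\mu),\tau;\mu)=\psi(\tau;\mu)$ for all $\tau\in\Sigma^N_{rb}$. *)

theory Defs
  imports "HOL-Analysis.Analysis"
begin

text \<open>Abstract Hilbert-space rendering of the parametric mixed/primal setting.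
  Types: 'v = V (Hilbert space), 'w = scalar L2(Omega) (target of the embedding of V
  and of the formal adjoint), 'q = (possibly vector) L2(Omega) (target of Lambda),
  'b = L2(boundary of Omega).  Restriction to Gamma_D / Gamma_N is modelled by
  complementary orthogonal projections PD, PN on 'b.\<close>

definition orth_proj :: "('b::real_inner \<Rightarrow> 'b) \<Rightarrow> bool" where
  "orth_proj P \<longleftrightarrow> bounded_linear P \<and> (\<forall>x. P (P x) = P x)
     \<and> (\<forall>x y. inner (P x) y = inner x (P y))"

text \<open>L2 product on a boundary part Gamma, given by its restriction projection.\<close>
definition ip_on :: "('b::real_inner \<Rightarrow> 'b) \<Rightarrow> 'b \<Rightarrow> 'b \<Rightarrow> real" where
  "ip_on P x y = inner (P x) (P y)"

definition linear_on_set :: "'a::real_vector set \<Rightarrow> ('a \<Rightarrow> 'c::real_vector) \<Rightarrow> bool" where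
  "linear_on_set S F \<longleftrightarrow> (\<forall>x\<in>S. \<forall>y\<in>S. F (x + y) = F x + F y)
     \<and> (\<forall>x\<in>S. \<forall>c. F (c *\<^sub>R x) = c *\<^sub>R F x)"

definition fin_dim_space :: "'a::real_vector set \<Rightarrow> bool" where
  "fin_dim_space S \<longleftrightarrow> (\<exists>B. finite B \<and> S = span B)"

definition compact_embedding :: "('v::real_normed_vector \<Rightarrow> 'w::real_normed_vector) \<Rightarrow> bool" where
  "compact_embedding \<iota> \<longleftrightarrow> bounded_linear \<iota> \<and> inj \<iota>
     \<and> (\<forall>S. bounded S \<longrightarrow> compact (closure (\<iota> ` S)))"

definition inf_sup :: "'q::real_normed_vector set \<Rightarrow> ('q \<Rightarrow> 'w::real_inner) \<Rightarrow> 'w set \<Rightarrow> real \<Rightarrow> bool" where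
  "inf_sup S Lt W \<beta> \<longleftrightarrow> (\<forall>v\<in>W. (SUP \<tau>\<in>S. inner (Lt \<tau>) v / (norm \<tau> + norm (Lt \<tau>))) \<ge> \<beta> * norm v)"

definition V0 :: "('v \<Rightarrow> 'b::real_vector) \<Rightarrow> ('b \<Rightarrow> 'b) \<Rightarrow> 'v set" where
  "V0 tr0 PD = {v. PD (tr0 v) = 0}"

definition Vg :: "('v \<Rightarrow> 'b) \<Rightarrow> ('b \<Rightarrow> 'b) \<Rightarrow> 'b \<Rightarrow> 'v set" where
  "Vg tr0 PD g = {v. PD (tr0 v) = PD g}"

definition Sigma0 :: "'q set \<Rightarrow> ('q \<Rightarrow> 'b::real_vector) \<Rightarrow> ('b \<Rightarrow> 'b) \<Rightarrow> 'q set" where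
  "Sigma0 \<Sigma> tr1 PN = {\<tau>\<in>\<Sigma>. PN (tr1 \<tau>) = 0}"

definition Sigma00 :: "'q set \<Rightarrow> ('q \<Rightarrow> 'w::real_vector) \<Rightarrow> ('q \<Rightarrow> 'b::real_vector) \<Rightarrow> ('b \<Rightarrow> 'b) \<Rightarrow> 'q set" where
  "Sigma00 \<Sigma> Lt tr1 PN = {\<tau>\<in>Sigma0 \<Sigma> tr1 PN. Lt \<tau> = 0}"

definition Sigma_fg :: "'q set \<Rightarrow> ('q \<Rightarrow> 'w::real_vector) \<Rightarrow> ('q \<Rightarrow> 'b) \<Rightarrow> ('b \<Rightarrow> 'b) \<Rightarrow> 'w \<Rightarrow> 'b \<Rightarrow> 'q set" where
  "Sigma_fg \<Sigma> Lt tr1 PN f g = {\<tau>\<in>\<Sigma>. Lt \<tau> = - f \<and> PN (tr1 \<tau>) = PN g}"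

text \<open>Bilinear forms; A stands for the operator A(mu) at the fixed parameter.\<close>
definition a_form :: "('q::real_inner \<Rightarrow> 'q) \<Rightarrow> ('v \<Rightarrow> 'q) \<Rightarrow> 'v \<Rightarrow> 'v \<Rightarrow> real" where
  "a_form A \<Lambda> v w = inner (A (\<Lambda> v)) (\<Lambda> w)"

definition b_form :: "('q::real_inner \<Rightarrow> 'q) \<Rightarrow> 'q \<Rightarrow> 'q \<Rightarrow> real" where
  "b_form A \<rho> \<tau> = inner (inv A \<rho>) \<tau>"

definition c_form :: "('q::real_inner \<Rightarrow> 'q) \<Rightarrow> ('q \<Rightarrow> 'w::real_inner) \<Rightarrow> 'q \<times> 'w \<Rightarrow> 'q \<times> 'w \<Rightarrow> real" where
  "c_form A Lt \<rho>w \<tau>v = b_form A (fst \<rho>w) (fst \<tau>v) + inner (Lt (fst \<tau>v)) (snd \<rho>w)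
       + inner (Lt (fst \<rho>w)) (snd \<tau>v)"

definition phi_rhs :: "('q::real_inner \<Rightarrow> 'q) \<Rightarrow> ('v \<Rightarrow> 'q) \<Rightarrow> ('v \<Rightarrow> 'w::real_inner)
    \<Rightarrow> ('v \<Rightarrow> 'b::real_inner) \<Rightarrow> ('b \<Rightarrow> 'b) \<Rightarrow> 'w \<Rightarrow> 'b \<Rightarrow> 'v \<Rightarrow> 'v \<Rightarrow> real" where
  "phi_rhs A \<Lambda> \<iota> tr0 PN f gN ug v = inner f (\<iota> v) - ip_on PN gN (tr0 v) - a_form A \<Lambda> ug v"

definition psi_rhs :: "('q::real_inner \<Rightarrow> 'q) \<Rightarrow> ('q \<Rightarrow> 'b::real_inner) \<Rightarrow> ('b \<Rightarrow> 'b)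
    \<Rightarrow> 'b \<Rightarrow> 'q \<Rightarrow> 'q \<Rightarrow> real" where
  "psi_rhs A tr1 PD gD sfg \<tau> = - ip_on PD (tr1 \<tau>) gD - b_form A sfg \<tau>"

definition energy_norm :: "('q::real_inner \<Rightarrow> 'q) \<Rightarrow> ('v \<Rightarrow> 'q) \<Rightarrow> 'v \<Rightarrow> real" where
  "energy_norm A \<Lambda> v = sqrt (a_form A \<Lambda> v v)"

definition R_norm :: "('q::real_inner \<Rightarrow> 'q) \<Rightarrow> 'q \<Rightarrow> real" where
  "R_norm A \<tau> = sqrt (b_form A \<tau> \<tau>)"

definition pair_norm :: "('q::real_inner \<Rightarrow> 'q) \<Rightarrow> ('v \<Rightarrow> 'q) \<Rightarrow> 'v \<Rightarrow> 'q \<Rightarrow> real" where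
  "pair_norm A \<Lambda> v \<tau> = sqrt ((energy_norm A \<Lambda> v)\<^sup>2 + (R_norm A \<tau>)\<^sup>2)"

end

theory Submission
  imports Defs
begin

text \<open>Both inequalities are instances of Galerkin orthogonality in nested spaces.
  The finite element error \<open>e\<^sub>h\<close> is orthogonal, in the energy inner product, to the
  whole discrete space, which contains every snapshot and hence the reduced basis space.
  Since both discrete solutions use the same lift, \<open>x\<^sub>h - x\<^sub>r\<^sub>b\<close> lies in that space, so the
  reduced basis error splits orthogonally as \<open>e\<^sub>h + (x\<^sub>h - x\<^sub>r\<^sub>b)\<close> and Pythagoras gives the
  inequality.  If \<open>\<mu>\<close> is a snapshot parameter, \<open>x\<^sub>h - x\<^sub>r\<^sub>b\<close> lies in the
  reduced space, to which both errors are orthogonal, so its energy vanishes.  On the dual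
  side the discrete mixed problem, tested with \<open>(0, \<Lambda>\<^sup>t \<sigma>\<^sub>h)\<close>, forces \<open>\<Lambda>\<^sup>t \<sigma>\<^sub>h = 0\<close>; the mixed
  solution is then the Galerkin solution of the \<open>b\<close>-problem on the divergence-free
  discrete fluxes, and the same argument applies.\<close>

lemma linear_inv_bij:
  assumes "linear f" "bij f"
  shows "linear (inv f)"
proof (rule linearI)
  have f_inv: "f (inv f y) = y" for y
    using assms(2) by (simp add: bij_is_surj surj_f_inv_f)
  have inv_f: "inv f (f x) = x" for x
    using assms(2) by (simp add: bij_is_inj)
  fix x y :: 'b and c :: real
  show "inv f (x + y) = inv f x + inv f y"
    using inv_f[of "inv f x + inv f y"] by (simp add: linear_add[OF assms(1)] f_inv)
  show "inv f (c *\<^sub>R x) = c *\<^sub>R inv f x"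
    using inv_f[of "c *\<^sub>R inv f x"] by (simp add: linear_scale[OF assms(1)] f_inv)
qed

lemma linear_on_set_zero: "linear_on_set S F \<Longrightarrow> 0 \<in> S \<Longrightarrow> F 0 = 0"
  unfolding linear_on_set_def by (metis scale_zero_left)

lemma bilinear_orthogonal_span:
  assumes "bilinear a" "\<forall>v\<in>S. a e v = 0" "v \<in> span S"
  shows "a e v = 0"
  using assms linear_eq_0_on_span[of "a e" S v] unfolding bilinear_def by blast

lemma galerkin_error_pythagoras:
  fixes a :: "'a::real_vector \<Rightarrow> 'a \<Rightarrow> real"
  assumes a: "bilinear a" and sym: "\<And>x y. a x y = a y x"
    and orth_h: "\<forall>v\<in>S\<^sub>h. a (x - x\<^sub>h) v = 0"
    and diff_h: "x\<^sub>h - x\<^sub>r\<^sub>b \<in> span S\<^sub>h"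
  shows "a (x - x\<^sub>r\<^sub>b) (x - x\<^sub>r\<^sub>b) = a (x - x\<^sub>h) (x - x\<^sub>h) + a (x\<^sub>h - x\<^sub>r\<^sub>b) (x\<^sub>h - x\<^sub>r\<^sub>b)"
proof -
  let ?e = "x - x\<^sub>h" and ?d = "x\<^sub>h - x\<^sub>r\<^sub>b"
  have "a ?e ?d = 0"
    using bilinear_orthogonal_span[OF a orth_h diff_h] .
  have "a (x - x\<^sub>r\<^sub>b) (x - x\<^sub>r\<^sub>b) = a (?e + ?d) (?e + ?d)"
    by (simp add: algebra_simps)
  also have "\<dots> = a ?e ?e + a ?e ?d + a ?d ?e + a ?d ?d"
    by (simp only: bilinear_ladd[OF a] bilinear_radd[OF a] add.assoc)
  finally show ?thesis
    using \<open>a ?e ?d = 0\<close> sym[of ?d ?e] by simp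
qed

lemma galerkin_difference_null:
  assumes a: "bilinear a"
    and orth_h: "\<forall>v\<in>S. a (x - x\<^sub>h) v = 0" and orth_rb: "\<forall>v\<in>S. a (x - x\<^sub>r\<^sub>b) v = 0"
    and diff: "x\<^sub>h - x\<^sub>r\<^sub>b \<in> span S"
  shows "a (x\<^sub>h - x\<^sub>r\<^sub>b) (x\<^sub>h - x\<^sub>r\<^sub>b) = 0"
proof -
  have "x\<^sub>h - x\<^sub>r\<^sub>b = (x - x\<^sub>r\<^sub>b) - (x - x\<^sub>h)"
    by simp
  then have "a (x\<^sub>h - x\<^sub>r\<^sub>b) (x\<^sub>h - x\<^sub>r\<^sub>b)
      = a (x - x\<^sub>r\<^sub>b) (x\<^sub>h - x\<^sub>r\<^sub>b) - a (x - x\<^sub>h) (x\<^sub>h - x\<^sub>r\<^sub>b)"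
    by (metis bilinear_lsub[OF a])
  then show ?thesis
    using bilinear_orthogonal_span[OF a orth_h diff] bilinear_orthogonal_span[OF a orth_rb diff]
    by simp
qed

lemma bilinear_a_form: "linear A \<Longrightarrow> linear \<Lambda> \<Longrightarrow> bilinear (a_form A \<Lambda>)"
  unfolding bilinear_def a_form_def
  by (auto intro!: linearI simp: linear_add linear_scale inner_add_left inner_add_right)

lemma a_form_commute:
  "\<forall>x y. inner (A x) y = inner x (A y) \<Longrightarrow> a_form A \<Lambda> v w = a_form A \<Lambda> w v"
  unfolding a_form_def by (simp add: inner_commute)

lemma a_form_nonneg: "\<forall>q. 0 \<le> inner (A q) q \<Longrightarrow> 0 \<le> a_form A \<Lambda> v v"
  unfolding a_form_def by simp

lemma bilinear_b_form: "linear A \<Longrightarrow> bij A \<Longrightarrow> bilinear (b_form A)"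
  using linear_inv_bij[of A] unfolding bilinear_def b_form_def
  by (auto intro!: linearI simp: linear_add linear_scale inner_add_left inner_add_right)

lemma b_form_commute:
  assumes "bij A" "\<forall>x y. inner (A x) y = inner x (A y)"
  shows "b_form A \<rho> \<tau> = b_form A \<tau> \<rho>"
proof -
  have A_inv: "A (inv A x) = x" for x
    using assms(1) by (simp add: bij_is_surj surj_f_inv_f)
  have "inner (inv A \<rho>) \<tau> = inner (inv A \<rho>) (A (inv A \<tau>))"
    by (simp add: A_inv)
  also have "\<dots> = inner (A (inv A \<rho>)) (inv A \<tau>)"
    by (metis assms(2))
  also have "\<dots> = inner \<rho> (inv A \<tau>)"
    by (simp add: A_inv)
  finally show ?thesis
    unfolding b_form_def by (simp add: inner_commute)
qed

lemma b_form_nonneg: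
  assumes "bij A" "\<forall>q. 0 \<le> inner (A q) q"
  shows "0 \<le> b_form A \<tau> \<tau>"
proof -
  have "b_form A \<tau> \<tau> = inner (inv A \<tau>) (A (inv A \<tau>))"
    using assms(1) by (simp add: b_form_def bij_is_surj surj_f_inv_f)
  then show ?thesis
    using assms(2) by (simp add: inner_commute)
qed

lemma primal_galerkin_orthogonality:
  assumes "bilinear (a_form A \<Lambda>)"
    and "a_form A \<Lambda> u v = inner f (\<iota> v) - ip_on PN gN (tr0 v)"
    and "a_form A \<Lambda> u\<^sub>0 v = phi_rhs A \<Lambda> \<iota> tr0 PN f gN ug v"
  shows "a_form A \<Lambda> (u - (u\<^sub>0 + ug)) v = 0"
  using assms by (simp add: bilinear_lsub bilinear_ladd phi_rhs_def)

lemma dual_galerkin_orthogonality: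
  assumes "bilinear (b_form A)"
    and "b_form A \<sigma> \<tau> = - ip_on PD (tr1 \<tau>) gD"
    and "b_form A \<sigma>\<^sub>0 \<tau> = psi_rhs A tr1 PD gD sfg \<tau>"
  shows "b_form A (\<sigma> - (\<sigma>\<^sub>0 + sfg)) \<tau> = 0"
  using assms by (simp add: bilinear_lsub bilinear_ladd psi_rhs_def)

lemma primal_rb_error_split:
  assumes a: "bilinear (a_form A \<Lambda>)" "\<And>v w. a_form A \<Lambda> v w = a_form A \<Lambda> w v"
    and u: "\<forall>v\<in>V0 tr0 PD. a_form A \<Lambda> u v = inner f (\<iota> v) - ip_on PN gN (tr0 v)"
    and W\<^sub>h: "W\<^sub>h \<subseteq> V0 tr0 PD"
    and u\<^sub>h: "u\<^sub>h \<in> W\<^sub>h" "\<forall>v\<in>W\<^sub>h. a_form A \<Lambda> u\<^sub>h v = phi_rhs A \<Lambda> \<iota> tr0 PN f gN ug v"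
    and S: "S \<subseteq> W\<^sub>h"
    and u\<^sub>r\<^sub>b: "u\<^sub>r\<^sub>b \<in> span S" "\<forall>v\<in>span S. a_form A \<Lambda> u\<^sub>r\<^sub>b v = phi_rhs A \<Lambda> \<iota> tr0 PN f gN ug v"
  shows "a_form A \<Lambda> (u - (u\<^sub>r\<^sub>b + ug)) (u - (u\<^sub>r\<^sub>b + ug))
      = a_form A \<Lambda> (u - (u\<^sub>h + ug)) (u - (u\<^sub>h + ug)) + a_form A \<Lambda> (u\<^sub>h - u\<^sub>r\<^sub>b) (u\<^sub>h - u\<^sub>r\<^sub>b)"
    and "u\<^sub>h \<in> S \<Longrightarrow> a_form A \<Lambda> (u\<^sub>h - u\<^sub>r\<^sub>b) (u\<^sub>h - u\<^sub>r\<^sub>b) = 0"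
proof -
  have diff: "(u\<^sub>h + ug) - (u\<^sub>r\<^sub>b + ug) = u\<^sub>h - u\<^sub>r\<^sub>b"
    by simp
  have orth_h: "\<forall>v\<in>W\<^sub>h. a_form A \<Lambda> (u - (u\<^sub>h + ug)) v = 0"
    using primal_galerkin_orthogonality[OF a(1)] u W\<^sub>h u\<^sub>h(2) by blast
  have "u\<^sub>h - u\<^sub>r\<^sub>b \<in> span W\<^sub>h"
    using u\<^sub>h(1) u\<^sub>r\<^sub>b(1) span_mono[OF S] by (blast intro: span_diff span_base)
  then show "a_form A \<Lambda> (u - (u\<^sub>r\<^sub>b + ug)) (u - (u\<^sub>r\<^sub>b + ug))
      = a_form A \<Lambda> (u - (u\<^sub>h + ug)) (u - (u\<^sub>h + ug)) + a_form A \<Lambda> (u\<^sub>h - u\<^sub>r\<^sub>b) (u\<^sub>h - u\<^sub>r\<^sub>b)"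
    using galerkin_error_pythagoras[OF a orth_h] by (simp only: diff)
  assume "u\<^sub>h \<in> S"
  then have "u\<^sub>h - u\<^sub>r\<^sub>b \<in> span S"
    using u\<^sub>r\<^sub>b(1) by (blast intro: span_diff span_base)
  moreover have "\<forall>v\<in>S. a_form A \<Lambda> (u - (u\<^sub>h + ug)) v = 0"
    using orth_h S by blast
  moreover have "\<forall>v\<in>S. a_form A \<Lambda> (u - (u\<^sub>r\<^sub>b + ug)) v = 0"
    using primal_galerkin_orthogonality[OF a(1)] u W\<^sub>h S u\<^sub>r\<^sub>b(2) span_base by blast
  ultimately show "a_form A \<Lambda> (u\<^sub>h - u\<^sub>r\<^sub>b) (u\<^sub>h - u\<^sub>r\<^sub>b) = 0"
    using galerkin_difference_null[OF a(1)] by (metis diff)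
qed

lemma dual_rb_error_split:
  assumes b: "bilinear (b_form A)" "\<And>\<rho> \<tau>. b_form A \<rho> \<tau> = b_form A \<tau> \<rho>"
    and \<sigma>: "\<forall>\<tau>\<in>Sigma00 \<Sigma> Lt tr1 PN. b_form A \<sigma> \<tau> = - ip_on PD (tr1 \<tau>) gD"
    and W\<^sub>h: "W\<^sub>h \<subseteq> Sigma00 \<Sigma> Lt tr1 PN"
    and \<sigma>\<^sub>h: "\<sigma>\<^sub>h \<in> W\<^sub>h" "\<forall>\<tau>\<in>W\<^sub>h. b_form A \<sigma>\<^sub>h \<tau> = psi_rhs A tr1 PD gD sfg \<tau>"
    and S: "S \<subseteq> W\<^sub>h"
    and \<sigma>\<^sub>r\<^sub>b: "\<sigma>\<^sub>r\<^sub>b \<in> span S" "\<forall>\<tau>\<in>span S. b_form A \<sigma>\<^sub>r\<^sub>b \<tau> = psi_rhs A tr1 PD gD sfg \<tau>"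
  shows "b_form A (\<sigma> - (\<sigma>\<^sub>r\<^sub>b + sfg)) (\<sigma> - (\<sigma>\<^sub>r\<^sub>b + sfg))
      = b_form A (\<sigma> - (\<sigma>\<^sub>h + sfg)) (\<sigma> - (\<sigma>\<^sub>h + sfg)) + b_form A (\<sigma>\<^sub>h - \<sigma>\<^sub>r\<^sub>b) (\<sigma>\<^sub>h - \<sigma>\<^sub>r\<^sub>b)"
    and "\<sigma>\<^sub>h \<in> S \<Longrightarrow> b_form A (\<sigma>\<^sub>h - \<sigma>\<^sub>r\<^sub>b) (\<sigma>\<^sub>h - \<sigma>\<^sub>r\<^sub>b) = 0"
proof -
  have diff: "(\<sigma>\<^sub>h + sfg) - (\<sigma>\<^sub>r\<^sub>b + sfg) = \<sigma>\<^sub>h - \<sigma>\<^sub>r\<^sub>b"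
    by simp
  have orth_h: "\<forall>\<tau>\<in>W\<^sub>h. b_form A (\<sigma> - (\<sigma>\<^sub>h + sfg)) \<tau> = 0"
    using dual_galerkin_orthogonality[OF b(1)] \<sigma> W\<^sub>h \<sigma>\<^sub>h(2) by blast
  have "\<sigma>\<^sub>h - \<sigma>\<^sub>r\<^sub>b \<in> span W\<^sub>h"
    using \<sigma>\<^sub>h(1) \<sigma>\<^sub>r\<^sub>b(1) span_mono[OF S] by (blast intro: span_diff span_base)
  then show "b_form A (\<sigma> - (\<sigma>\<^sub>r\<^sub>b + sfg)) (\<sigma> - (\<sigma>\<^sub>r\<^sub>b + sfg))
      = b_form A (\<sigma> - (\<sigma>\<^sub>h + sfg)) (\<sigma> - (\<sigma>\<^sub>h + sfg)) + b_form A (\<sigma>\<^sub>h - \<sigma>\<^sub>r\<^sub>b) (\<sigma>\<^sub>h - \<sigma>\<^sub>r\<^sub>b)"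
    using galerkin_error_pythagoras[OF b orth_h] by (simp only: diff)
  assume "\<sigma>\<^sub>h \<in> S"
  then have "\<sigma>\<^sub>h - \<sigma>\<^sub>r\<^sub>b \<in> span S"
    using \<sigma>\<^sub>r\<^sub>b(1) by (blast intro: span_diff span_base)
  moreover have "\<forall>\<tau>\<in>S. b_form A (\<sigma> - (\<sigma>\<^sub>h + sfg)) \<tau> = 0"
    using orth_h S by blast
  moreover have "\<forall>\<tau>\<in>S. b_form A (\<sigma> - (\<sigma>\<^sub>r\<^sub>b + sfg)) \<tau> = 0"
    using dual_galerkin_orthogonality[OF b(1)] \<sigma> W\<^sub>h S \<sigma>\<^sub>r\<^sub>b(2) span_base by blast
  ultimately show "b_form A (\<sigma>\<^sub>h - \<sigma>\<^sub>r\<^sub>b) (\<sigma>\<^sub>h - \<sigma>\<^sub>r\<^sub>b) = 0"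
    using galerkin_difference_null[OF b(1)] by (metis diff)
qed

lemma mixed_discrete_flux_reduced:
  assumes \<Sigma>: "subspace \<Sigma>" and \<Sigma>\<^sub>h: "subspace \<Sigma>\<^sub>h" "\<Sigma>\<^sub>h \<subseteq> \<Sigma>" and D\<^sub>h: "Lt ` \<Sigma>\<^sub>h = D\<^sub>h"
    and lin: "linear_on_set \<Sigma> Lt" "linear_on_set \<Sigma> tr1" "linear PN" "linear PD"
    and \<sigma>: "\<sigma> \<in> \<Sigma>\<^sub>h \<inter> Sigma0 \<Sigma> tr1 PN"
    and mixed: "\<forall>\<tau>\<in>\<Sigma>\<^sub>h \<inter> Sigma0 \<Sigma> tr1 PN. \<forall>v\<in>D\<^sub>h.
        c_form A Lt (\<sigma>, w) (\<tau>, v) = psi_rhs A tr1 PD gD sfg \<tau>"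
  shows "\<sigma> \<in> \<Sigma>\<^sub>h \<inter> Sigma00 \<Sigma> Lt tr1 PN"
    and "\<forall>\<tau>\<in>\<Sigma>\<^sub>h \<inter> Sigma00 \<Sigma> Lt tr1 PN. b_form A \<sigma> \<tau> = psi_rhs A tr1 PD gD sfg \<tau>"
proof -
  have "0 \<in> \<Sigma>"
    using \<Sigma> by (rule subspace_0)
  then have Lt_0: "Lt 0 = 0" and tr1_0: "tr1 0 = 0"
    using lin(1,2) by (simp_all add: linear_on_set_zero)
  have "0 \<in> \<Sigma>\<^sub>h"
    using \<Sigma>\<^sub>h(1) by (rule subspace_0)
  then have zero_test: "0 \<in> \<Sigma>\<^sub>h \<inter> Sigma0 \<Sigma> tr1 PN" and "0 \<in> D\<^sub>h"
    using \<open>0 \<in> \<Sigma>\<close> D\<^sub>h Lt_0 tr1_0 linear_0[OF lin(3)] unfolding Sigma0_def by force+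
  have "Lt \<sigma> \<in> D\<^sub>h"
    using \<sigma> D\<^sub>h by blast
  then have "c_form A Lt (\<sigma>, w) (0, Lt \<sigma>) = psi_rhs A tr1 PD gD sfg 0"
    using mixed zero_test by blast
  then have "inner (Lt \<sigma>) (Lt \<sigma>) = 0"
    by (simp add: c_form_def psi_rhs_def b_form_def ip_on_def Lt_0 tr1_0 linear_0[OF lin(4)])
  then show "\<sigma> \<in> \<Sigma>\<^sub>h \<inter> Sigma00 \<Sigma> Lt tr1 PN"
    using \<sigma> unfolding Sigma00_def by simp
  show "\<forall>\<tau>\<in>\<Sigma>\<^sub>h \<inter> Sigma00 \<Sigma> Lt tr1 PN. b_form A \<sigma> \<tau> = psi_rhs A tr1 PD gD sfg \<tau>"
  proof
    fix \<tau> assume \<tau>: "\<tau> \<in> \<Sigma>\<^sub>h \<inter> Sigma00 \<Sigma> Lt tr1 PN"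
    then have "c_form A Lt (\<sigma>, w) (\<tau>, 0) = psi_rhs A tr1 PD gD sfg \<tau>"
      using mixed \<open>0 \<in> D\<^sub>h\<close> unfolding Sigma00_def by blast
    then show "b_form A \<sigma> \<tau> = psi_rhs A tr1 PD gD sfg \<tau>"
      using \<tau> unfolding Sigma00_def by (simp add: c_form_def)
  qed
qed

lemma error_norms_compare:
  assumes "a_form A \<Lambda> e' e' = a_form A \<Lambda> e e + P" "b_form A s' s' = b_form A s s + Q"
    and "0 \<le> a_form A \<Lambda> e e" "0 \<le> b_form A s s" "0 \<le> P" "0 \<le> Q"
    and "c \<longrightarrow> P = 0 \<and> Q = 0"
  shows "energy_norm A \<Lambda> e \<le> energy_norm A \<Lambda> e'
     \<and> R_norm A s \<le> R_norm A s'
     \<and> pair_norm A \<Lambda> e s \<le> pair_norm A \<Lambda> e' s'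
     \<and> (c \<longrightarrow> energy_norm A \<Lambda> e = energy_norm A \<Lambda> e' \<and> R_norm A s = R_norm A s'
          \<and> pair_norm A \<Lambda> e s = pair_norm A \<Lambda> e' s')"
  using assms by (simp add: pair_norm_def energy_norm_def R_norm_def)

theorem theorem5p7:
  fixes \<Lambda> :: "'v::{real_inner,complete_space} \<Rightarrow> 'q::{real_inner,complete_space}"
    and \<iota> :: "'v \<Rightarrow> 'w::{real_inner,complete_space}"
    and Lt :: "'q \<Rightarrow> 'w"
    and \<Sigma> :: "'q set"
    and tr0 :: "'v \<Rightarrow> 'b::{real_inner,complete_space}"
    and tr1 :: "'q \<Rightarrow> 'b"
    and PD PN :: "'b \<Rightarrow> 'b"
    and \<D> :: "'p set"
    and A :: "'p \<Rightarrow> 'q \<Rightarrow> 'q"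
    and f :: "'p \<Rightarrow> 'w" and gD gN :: "'p \<Rightarrow> 'b"
    and c1 c2 c3 \<beta> :: real
    and Vh :: "'v set" and Dh :: "'w set" and \<Sigma>h :: "'q set"
    and ug :: "'p \<Rightarrow> 'v" and sfg :: "'p \<Rightarrow> 'q"
    and u0h :: "'p \<Rightarrow> 'v" and s00h :: "'p \<Rightarrow> 'q" and wh :: "'p \<Rightarrow> 'w"
    and SN :: "'p set"
    and \<mu> :: 'p
    and u :: 'v and \<sigma> :: 'q
    and u0rb :: 'v and s00rb :: 'q
  assumes
    \<comment> \<open>V compactly embedded in L2, Lambda continuous, formal adjoint Lt on Sigma\<close>
    emb: "compact_embedding \<iota>"
    and Lam: "bounded_linear \<Lambda>"
    and Sig_sub: "subspace \<Sigma>"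
    and Lt_lin: "linear_on_set \<Sigma> Lt"
    and tr0_lin: "bounded_linear tr0"
    and tr1_lin: "linear_on_set \<Sigma> tr1"
    and green: "\<forall>\<tau>\<in>\<Sigma>. \<forall>v. inner \<tau> (\<Lambda> v) - inner (Lt \<tau>) (\<iota> v) = inner (tr1 \<tau>) (tr0 v)"
    \<comment> \<open>boundary split into Gamma_D and Gamma_N, meas(Gamma_D) \<noteq> 0\<close>
    and PD: "orth_proj PD" and PN: "orth_proj PN"
    and PDN: "\<forall>x. PD x + PN x = x"
    and PD_nz: "PD \<noteq> (\<lambda>x. 0)"
    \<comment> \<open>Poincare-type inequality and continuous inf-sup\<close>
    and c3: "c3 > 0" and poinc: "\<forall>v\<in>V0 tr0 PD. norm (\<Lambda> v) \<ge> c3 * norm (\<iota> v)"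
    and beta: "\<beta> > 0" and infsup: "inf_sup \<Sigma> Lt UNIV \<beta>"
    \<comment> \<open>the operators A(mu)\<close>
    and c12: "c1 > 0" "c2 > 0"
    and A_prop: "\<forall>\<nu>\<in>\<D>. bounded_linear (A \<nu>) \<and> bij (A \<nu>)
        \<and> (\<forall>x y. inner (A \<nu> x) y = inner x (A \<nu> y))
        \<and> (\<forall>q. c1 * (norm q)\<^sup>2 \<le> inner (A \<nu> q) q \<and> inner (A \<nu> q) q \<le> c2 * (norm q)\<^sup>2)"
    \<comment> \<open>finite element spaces\<close>
    and Vh_fd: "fin_dim_space Vh" and Dh_fd: "fin_dim_space Dh" and Sh_fd: "fin_dim_space \<Sigma>h"
    and Sh_sub: "\<Sigma>h \<subseteq> \<Sigma>"
    and Lt_Sh: "Lt ` \<Sigma>h = Dh"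
    and dinfsup: "\<exists>\<beta>h>0. inf_sup \<Sigma>h Lt Dh \<beta>h"
    \<comment> \<open>data and discrete lifts\<close>
    and f_Dh: "\<forall>\<nu>\<in>\<D>. f \<nu> \<in> Dh"
    and ug_prop: "\<forall>\<nu>\<in>\<D>. ug \<nu> \<in> Vh \<inter> Vg tr0 PD (gD \<nu>)"
    and sfg_prop: "\<forall>\<nu>\<in>\<D>. sfg \<nu> \<in> \<Sigma>h \<inter> Sigma_fg \<Sigma> Lt tr1 PN (f \<nu>) (gN \<nu>)"
    \<comment> \<open>finite element primal and dual solutions (for every parameter)\<close>
    and u0h_prop: "\<forall>\<nu>\<in>\<D>. u0h \<nu> \<in> Vh \<inter> V0 tr0 PD \<and>
        (\<forall>v\<in>Vh \<inter> V0 tr0 PD. a_form (A \<nu>) \<Lambda> (u0h \<nu>) v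
            = phi_rhs (A \<nu>) \<Lambda> \<iota> tr0 PN (f \<nu>) (gN \<nu>) (ug \<nu>) v)"
    and s00h_prop: "\<forall>\<nu>\<in>\<D>. s00h \<nu> \<in> \<Sigma>h \<inter> Sigma0 \<Sigma> tr1 PN \<and> wh \<nu> \<in> Dh \<and>
        (\<forall>\<tau>\<in>\<Sigma>h \<inter> Sigma0 \<Sigma> tr1 PN. \<forall>v\<in>Dh.
            c_form (A \<nu>) Lt (s00h \<nu>, wh \<nu>) (\<tau>, v) = psi_rhs (A \<nu>) tr1 PD (gD \<nu>) (sfg \<nu>) \<tau>)"
    \<comment> \<open>reduced basis\<close>
    and SN: "finite SN" "SN \<subseteq> \<D>"
    and mu: "\<mu> \<in> \<D>"
    and u0rb_prop: "u0rb \<in> span (u0h ` SN) \<and>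
        (\<forall>v\<in>span (u0h ` SN). a_form (A \<mu>) \<Lambda> u0rb v
            = phi_rhs (A \<mu>) \<Lambda> \<iota> tr0 PN (f \<mu>) (gN \<mu>) (ug \<mu>) v)"
    and s00rb_prop: "s00rb \<in> span (s00h ` SN) \<and>
        (\<forall>\<tau>\<in>span (s00h ` SN). b_form (A \<mu>) s00rb \<tau>
            = psi_rhs (A \<mu>) tr1 PD (gD \<mu>) (sfg \<mu>) \<tau>)"
    \<comment> \<open>exact solutions\<close>
    and u_prop: "u \<in> Vg tr0 PD (gD \<mu>) \<and>
        (\<forall>v\<in>V0 tr0 PD. a_form (A \<mu>) \<Lambda> u v = inner (f \<mu>) (\<iota> v) - ip_on PN (gN \<mu>) (tr0 v))"
    and sigma_prop: "\<sigma> \<in> Sigma_fg \<Sigma> Lt tr1 PN (f \<mu>) (gN \<mu>) \<and>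
        (\<forall>\<tau>\<in>Sigma00 \<Sigma> Lt tr1 PN. b_form (A \<mu>) \<sigma> \<tau> = - ip_on PD (tr1 \<tau>) (gD \<mu>))"
  shows
    "energy_norm (A \<mu>) \<Lambda> (u - (u0h \<mu> + ug \<mu>)) \<le> energy_norm (A \<mu>) \<Lambda> (u - (u0rb + ug \<mu>))
     \<and> R_norm (A \<mu>) (\<sigma> - (s00h \<mu> + sfg \<mu>)) \<le> R_norm (A \<mu>) (\<sigma> - (s00rb + sfg \<mu>))
     \<and> pair_norm (A \<mu>) \<Lambda> (u - (u0h \<mu> + ug \<mu>)) (\<sigma> - (s00h \<mu> + sfg \<mu>))
         \<le> pair_norm (A \<mu>) \<Lambda> (u - (u0rb + ug \<mu>)) (\<sigma> - (s00rb + sfg \<mu>))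
     \<and> (\<mu> \<in> SN \<longrightarrow>
         energy_norm (A \<mu>) \<Lambda> (u - (u0h \<mu> + ug \<mu>)) = energy_norm (A \<mu>) \<Lambda> (u - (u0rb + ug \<mu>))
       \<and> R_norm (A \<mu>) (\<sigma> - (s00h \<mu> + sfg \<mu>)) = R_norm (A \<mu>) (\<sigma> - (s00rb + sfg \<mu>))
       \<and> pair_norm (A \<mu>) \<Lambda> (u - (u0h \<mu> + ug \<mu>)) (\<sigma> - (s00h \<mu> + sfg \<mu>))
         = pair_norm (A \<mu>) \<Lambda> (u - (u0rb + ug \<mu>)) (\<sigma> - (s00rb + sfg \<mu>)))"
proof -
  have A: "linear (A \<mu>)" "bij (A \<mu>)" "\<forall>x y. inner (A \<mu> x) y = inner x (A \<mu> y)"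
    using A_prop mu by (auto simp: bounded_linear.linear)
  have A_nonneg: "\<forall>q. 0 \<le> inner (A \<mu> q) q"
    using A_prop mu c12(1) by (meson order_trans zero_le_mult_iff zero_le_power2 less_imp_le)
  have "linear PD" "linear PN"
    using PD PN unfolding orth_proj_def by (simp_all add: bounded_linear.linear)
  moreover have "subspace \<Sigma>h"
    using Sh_fd unfolding fin_dim_space_def by (auto simp: subspace_span)
  ultimately have flux: "s00h \<nu> \<in> \<Sigma>h \<inter> Sigma00 \<Sigma> Lt tr1 PN"
      "\<forall>\<tau>\<in>\<Sigma>h \<inter> Sigma00 \<Sigma> Lt tr1 PN. b_form (A \<nu>) (s00h \<nu>) \<tau> = psi_rhs (A \<nu>) tr1 PD (gD \<nu>) (sfg \<nu>) \<tau>"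
    if "\<nu> \<in> \<D>" for \<nu>
    using mixed_discrete_flux_reduced[OF Sig_sub _ Sh_sub Lt_Sh Lt_lin tr1_lin] s00h_prop that
    by blast+
  have u0h_mu: "u0h \<mu> \<in> Vh \<inter> V0 tr0 PD"
      "\<forall>v\<in>Vh \<inter> V0 tr0 PD. a_form (A \<mu>) \<Lambda> (u0h \<mu>) v = phi_rhs (A \<mu>) \<Lambda> \<iota> tr0 PN (f \<mu>) (gN \<mu>) (ug \<mu>) v"
    using u0h_prop mu by blast+
  have snapshots: "u0h ` SN \<subseteq> Vh \<inter> V0 tr0 PD" "s00h ` SN \<subseteq> \<Sigma>h \<inter> Sigma00 \<Sigma> Lt tr1 PN"
    using u0h_prop flux(1) SN(2) by blast+
  note primal = primal_rb_error_split[OF bilinear_a_form[OF A(1) bounded_linear.linear[OF Lam]]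
      a_form_commute[OF A(3)] conjunct2[OF u_prop] Int_lower2 u0h_mu snapshots(1) u0rb_prop[THEN conjunct1]
      u0rb_prop[THEN conjunct2]]
  note dual = dual_rb_error_split[OF bilinear_b_form[OF A(1,2)] b_form_commute[OF A(2,3)]
      conjunct2[OF sigma_prop] Int_lower2 flux[OF mu] snapshots(2) s00rb_prop[THEN conjunct1]
      s00rb_prop[THEN conjunct2]]
  show ?thesis
    by (rule error_norms_compare[OF primal(1) dual(1)])
      (use a_form_nonneg[OF A_nonneg] b_form_nonneg[OF A(2) A_nonneg] primal(2) dual(2) in auto)
qed

end
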